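(* Let $Q$ be an absolutely continuous stochastic algorithm with Hamiltonian $H$, and suppose that for all $k\in[n]$, $h\in\mathcal{H}$, $y,y'\in\mathcal{X}$ and $\mathbf{x}\in\mathcal{X}^n$ we have $D^k_{y,y'}H(h,\mathbf{x})\le c$ and $h(y)\in[0,b]$. For $h\in\mathcal{H}$ let $v(h)=\mathbb{E}[(h(X)-\mathbb{E}[h(X')])^2]$. Then for $\delta>0$, with probability at least $1-\delta$ in $\mathbf{X}\sim\mu^n$ and $h\sim Q_{\mathbf{X}}$, $$\Delta(h,\mathbf{X})\le 2\sqrt{v(h)\left(c^2+\frac{\ln(1/\delta)}{n}\right)}+b\left(c^2+\frac{\ln(1/\delta)}{n}\right).$$
   Context: $\mathcal{X}$ is a measurable space with probability measure $\mu$, $\mathbf{X}=(X_1,\dots,X_n)\sim\mu^n$, $X,X'\sim\mu$ independent. $\mathcal{H}$ is a measurable space of measurable functions $h:\mathcal{X}\to[0,\infty)$ with nonnegative a-priori measure $\pi$. A stochastic algorithm $Q:\mathbf{x}\mapsto Q_{\mathbf{x}}$ (probability measures on $\mathcal{H}$) is absolutely continuous if each $Q_{\mathbf{x}}$ and $\pi$ are mutually absolutely continuous. A measurable $H:\mathcal{H}\times\mathcal{X}^n\to\mathbb{R}$ is a Hamiltonian for $Q$ if $dQ_{\mathbf{x}}(h)=e^{H(h,\mathbf{x})}d\pi(h)/Z(\mathbf{x})$ with $Z(\mathbf{x})=\int_{\mathcal{H}}e^{H(h,\mathbf{x})}d\pi(h)$. Generalization gap: $\Delta(h,\mathbf{x})=\mathbb{E}[h(X)]-\frac1n\sum_{i=1}^n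 h(x_i)$. $S^k_y\mathbf{x}$ replaces the $k$-th coordinate of $\mathbf{x}$ by $y$; $D^k_{y,y'}G(h,\mathbf{x})=G(h,S^k_y\mathbf{x})-G(h,S^k_{y'}\mathbf{x})$. Probability "in $\mathbf{X}\sim\mu^n$ and $h\sim Q_{\mathbf{X}}$" is w.r.t. the joint law. All functions are assumed to have finite exponential moments of all orders. *)

theory Defs
  imports "HOL-Probability.Probability"
begin

text \<open>Samples \<open>x \<in> X^n\<close> are functions \<open>nat \<Rightarrow> 'x\<close> in \<open>PiE {..<n}\<close>;
  hypotheses are functions \<open>'x \<Rightarrow> real\<close>, forming the measurable space of the
  a-priori measure \<open>Pr\<close>.\<close>

definition sample_space :: "'x measure \<Rightarrow> nat \<Rightarrow> (nat \<Rightarrow> 'x) measure" where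
  "sample_space M n = PiM {..<n} (\<lambda>_. M)"

definition Zfun :: "('x \<Rightarrow> real) measure \<Rightarrow> (('x \<Rightarrow> real) \<Rightarrow> (nat \<Rightarrow> 'x) \<Rightarrow> real)
                     \<Rightarrow> (nat \<Rightarrow> 'x) \<Rightarrow> ennreal" where
  "Zfun Pr H x = (\<integral>\<^sup>+ h. ennreal (exp (H h x)) \<partial>Pr)"

definition stochastic_algorithm ::
  "('x \<Rightarrow> real) measure \<Rightarrow> (nat \<Rightarrow> 'x) measure \<Rightarrow> ((nat \<Rightarrow> 'x) \<Rightarrow> ('x \<Rightarrow> real) measure) \<Rightarrow> bool" where
  "stochastic_algorithm Pr XS Q \<longleftrightarrow>
     (\<forall>x\<in>space XS. prob_space (Q x) \<and> sets (Q x) = sets Pr)"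

definition abs_cont_algorithm ::
  "('x \<Rightarrow> real) measure \<Rightarrow> (nat \<Rightarrow> 'x) measure \<Rightarrow> ((nat \<Rightarrow> 'x) \<Rightarrow> ('x \<Rightarrow> real) measure) \<Rightarrow> bool" where
  "abs_cont_algorithm Pr XS Q \<longleftrightarrow> stochastic_algorithm Pr XS Q \<and>
     (\<forall>x\<in>space XS. absolutely_continuous Pr (Q x) \<and> absolutely_continuous (Q x) Pr)"

definition is_hamiltonian ::
  "('x \<Rightarrow> real) measure \<Rightarrow> (nat \<Rightarrow> 'x) measure \<Rightarrow> ((nat \<Rightarrow> 'x) \<Rightarrow> ('x \<Rightarrow> real) measure)
     \<Rightarrow> (('x \<Rightarrow> real) \<Rightarrow> (nat \<Rightarrow> 'x) \<Rightarrow> real) \<Rightarrow> bool" where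
  "is_hamiltonian Pr XS Q H \<longleftrightarrow>
     (\<lambda>(h, x). H h x) \<in> borel_measurable (Pr \<Otimes>\<^sub>M XS) \<and>
     (\<forall>x\<in>space XS. Q x = density Pr (\<lambda>h. ennreal (exp (H h x)) / Zfun Pr H x))"

definition gen_gap :: "'x measure \<Rightarrow> nat \<Rightarrow> ('x \<Rightarrow> real) \<Rightarrow> (nat \<Rightarrow> 'x) \<Rightarrow> real" where
  "gen_gap M n h x = (\<integral>z. h z \<partial>M) - (\<Sum>i<n. h (x i)) / real n"

definition hvar :: "'x measure \<Rightarrow> ('x \<Rightarrow> real) \<Rightarrow> real" where
  "hvar M h = (\<integral>z. (h z - (\<integral>z'. h z' \<partial>M))\<^sup>2 \<partial>M)"

end

theory Submission
  imports Defs
begin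

text \<open>
  The density of \<open>Q x\<close> with respect to \<open>Pr\<close> is \<open>exp g\<close> with \<open>g = H - ln Z\<close>. Replacing one
  sample point moves \<open>H\<close>, and hence \<open>ln Z\<close>, by at most \<open>c\<close>, so \<open>g h\<close> has bounded differences
  \<open>2 c\<close>. For a fixed hypothesis \<open>h\<close>, Bernstein's exponential moment bound gives
  \<open>E exp P \<le> 1\<close> for \<open>P = n (\<lambda> \<Delta> - \<kappa> \<lambda>\<^sup>2 v)\<close>, and McDiarmid's inequality gives
  \<open>E exp (2 (g - E g)) \<le> exp (2 n c\<^sup>2)\<close>. By AM-GM and Jensen,
  \<open>E exp (P / 2 - n c\<^sup>2 + g) \<le> exp (E g) \<le> E exp g\<close>. Integrating over \<open>Pr\<close>, exchanging the
  integrals and using \<open>\<integral> exp g d Pr = 1\<close>, Markov's inequality shows that \<open>P / 2 - n c\<^sup>2\<close>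
  exceeds \<open>ln (1 / \<delta>)\<close> with probability at most \<open>\<delta>\<close> under the joint law. For
  \<open>\<lambda> = 2 A / (sqrt (v A) + b A)\<close> with \<open>A = c\<^sup>2 + ln (1 / \<delta>) / n\<close> this event contains the
  event that \<open>\<Delta>\<close> exceeds the stated bound.
\<close>

section \<open>Elementary exponential inequalities\<close>

definition bernstein_coeff :: "real \<Rightarrow> real" where
  "bernstein_coeff t = 3 / (2 * (3 - t))"

lemma exp_le_one_plus_quadratic_nonpos:
  fixes u :: real
  assumes "u \<le> 0"
  shows "exp u \<le> 1 + u + u\<^sup>2 / 2"
proof -
  let ?f = "\<lambda>t::real. 1 + t + t\<^sup>2 / 2 - exp t"
  have "?f 0 \<le> ?f u"
  proof (rule DERIV_nonpos_imp_nonincreasing[OF assms])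
    fix x :: real
    show "\<exists>y. (?f has_real_derivative y) (at x) \<and> y \<le> 0"
      using exp_ge_add_one_self[of x] by (auto intro!: exI[of _ "1 + x - exp x"] derivative_eq_intros)
  qed
  then show ?thesis by simp
qed

lemma two_minus_mult_exp_le:
  fixes u :: real
  assumes "0 \<le> u"
  shows "(2 - u) * exp u \<le> 2 + u"
proof -
  let ?f = "\<lambda>t::real. (2 + t) - (2 - t) * exp t"
  have "?f 0 \<le> ?f u"
  proof (rule DERIV_nonneg_imp_nondecreasing[OF assms])
    fix x :: real
    have "(1 - x) * exp x \<le> exp (- x) * exp x"
      using exp_ge_add_one_self[of "- x"] by (intro mult_right_mono) auto
    then have "(1 - x) * exp x \<le> 1"
      by (simp add: exp_minus)
    then show "\<exists>y. (?f has_real_derivative y) (at x) \<and> 0 \<le> y"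
      by (auto intro!: exI[of _ "1 - (1 - x) * exp x"] derivative_eq_intros simp: algebra_simps)
  qed
  then show ?thesis by simp
qed

lemma six_minus_mult_exp_le:
  fixes u :: real
  assumes "0 \<le> u"
  shows "(6 - 2 * u) * exp u \<le> 6 + 4 * u + u\<^sup>2"
proof -
  let ?f = "\<lambda>t::real. (6 + 4 * t + t\<^sup>2) - (6 - 2 * t) * exp t"
  have "?f 0 \<le> ?f u"
  proof (rule DERIV_nonneg_imp_nondecreasing[OF assms])
    fix x :: real
    assume "0 \<le> x"
    then have "(2 - x) * exp x \<le> 2 + x"
      by (rule two_minus_mult_exp_le)
    then show "\<exists>y. (?f has_real_derivative y) (at x) \<and> 0 \<le> y"
      by (auto intro!: exI[of _ "4 + 2 * x - (4 - 2 * x) * exp x"] derivative_eq_intros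
          simp: algebra_simps)
  qed
  then show ?thesis by simp
qed

lemma exp_le_bernstein:
  fixes u c :: real
  assumes "0 \<le> c" "c < 3" "u \<le> c"
  shows "exp u \<le> 1 + u + bernstein_coeff c * u\<^sup>2"
proof (cases "u \<le> 0")
  case True
  have "u\<^sup>2 / 2 \<le> bernstein_coeff c * u\<^sup>2"
    using assms by (auto simp: bernstein_coeff_def field_simps)
  with exp_le_one_plus_quadratic_nonpos[OF True] show ?thesis by linarith
next
  case False
  then have u: "0 \<le> u" "u < 3" using assms by auto
  have "exp u \<le> (6 + 4 * u + u\<^sup>2) / (6 - 2 * u)"
    using six_minus_mult_exp_le[OF u(1)] u by (simp add: field_simps)
  also have "\<dots> = 1 + u + bernstein_coeff u * u\<^sup>2"
    using u by (simp add: bernstein_coeff_def field_simps power2_eq_square)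
  also have "\<dots> \<le> 1 + u + bernstein_coeff c * u\<^sup>2"
    using u assms by (auto simp: bernstein_coeff_def intro!: mult_right_mono divide_left_mono)
  finally show ?thesis .
qed

section \<open>Bounded differences and McDiarmid's inequality\<close>

lemma sample_space_fun_upd:
  assumes "x \<in> space (sample_space M n)" "y \<in> space M" "k < n"
  shows "x(k := y) \<in> space (sample_space M n)"
proof -
  have "x(k := y) \<in> PiE (insert k {..<n}) (\<lambda>_. space M)"
    using assms by (intro PiE_fun_upd) (auto simp: sample_space_def space_PiM)
  then show ?thesis
    using assms by (simp add: sample_space_def space_PiM insert_absorb)
qed

lemma sample_space_Suc_fun_upd:
  assumes "x \<in> space (sample_space M n)" "y \<in> space M"
  shows "x(n := y) \<in> space (sample_space M (Suc n))"
  using assms by (auto simp: sample_space_def space_PiM lessThan_Suc intro!: PiE_fun_upd)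

lemma prob_space_sample_space: "prob_space M \<Longrightarrow> prob_space (sample_space M n)"
  by (simp add: sample_space_def prob_space_PiM)

definition bounded_differences :: "'a measure \<Rightarrow> nat \<Rightarrow> ((nat \<Rightarrow> 'a) \<Rightarrow> real) \<Rightarrow> real \<Rightarrow> bool" where
  "bounded_differences M n f w \<longleftrightarrow>
     (\<forall>k<n. \<forall>x\<in>space (sample_space M n). \<forall>y\<in>space M. \<forall>y'\<in>space M.
        f (x(k := y)) - f (x(k := y')) \<le> w)"

lemma bounded_differencesD:
  "bounded_differences M n f w \<Longrightarrow> k < n \<Longrightarrow> x \<in> space (sample_space M n) \<Longrightarrow>
    y \<in> space M \<Longrightarrow> y' \<in> space M \<Longrightarrow> f (x(k := y)) - f (x(k := y')) \<le> w"
  by (auto simp: bounded_differences_def)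

lemma bounded_differences_abs_diff_le:
  assumes f: "bounded_differences M n f w"
    and x0: "x0 \<in> space (sample_space M n)" and x: "x \<in> space (sample_space M n)"
  shows "\<bar>f x - f x0\<bar> \<le> real n * w"
proof -
  define mix where "mix j = (\<lambda>i. if i < j then x i else x0 i)" for j
  have mix_space: "mix j \<in> space (sample_space M n)" for j
    using x x0 by (auto simp: mix_def sample_space_def space_PiM PiE_iff extensional_def)
  have "\<bar>f (mix j) - f x0\<bar> \<le> real j * w" if "j \<le> n" for j
    using that
  proof (induction j)
    case 0
    then show ?case by (simp add: mix_def)
  next
    case (Suc j)
    then have j: "j < n" by simp
    have xj: "x j \<in> space M" "x0 j \<in> space M"
      using x x0 j by (auto simp: sample_space_def space_PiM PiE_iff)
    have "mix (Suc j) = (mix j)(j := x j)" "mix j = (mix j)(j := x0 j)"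
      by (auto simp: mix_def)
    then have "\<bar>f (mix (Suc j)) - f (mix j)\<bar> \<le> w"
      using bounded_differencesD[OF f j mix_space xj] bounded_differencesD[OF f j mix_space xj(2,1)]
      by (metis abs_le_iff minus_diff_eq)
    with Suc show ?case by (simp add: algebra_simps)
  qed
  moreover have "mix n = x"
    using x x0 by (auto simp: mix_def sample_space_def space_PiM PiE_iff extensional_def)
  ultimately show ?thesis by fastforce
qed

lemma bounded_differences_imp_bounded:
  assumes "bounded_differences M n f w"
  obtains B where "\<And>x. x \<in> space (sample_space M n) \<Longrightarrow> \<bar>f x\<bar> \<le> B"
proof (cases "space (sample_space M n) = {}")
  case False
  then obtain x0 where x0: "x0 \<in> space (sample_space M n)" by blast
  have "\<bar>f x\<bar> \<le> \<bar>f x0\<bar> + real n * w" if "x \<in> space (sample_space M n)" for x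
    using bounded_differences_abs_diff_le[OF assms x0 that] by linarith
  then show ?thesis by (rule that)
qed (rule that, simp)

lemma bounded_differences_integrable:
  assumes "prob_space M" "f \<in> borel_measurable (sample_space M n)" "bounded_differences M n f w"
  shows "integrable (sample_space M n) f"
proof -
  interpret prob_space "sample_space M n"
    using assms(1) by (rule prob_space_sample_space)
  obtain B where "\<And>x. x \<in> space (sample_space M n) \<Longrightarrow> \<bar>f x\<bar> \<le> B"
    using bounded_differences_imp_bounded[OF assms(3)] by blast
  then show ?thesis
    using assms(2) by (intro integrable_const_bound[where B = B]) auto
qed

lemma Hoeffdings_lemma_bounded_differences:
  fixes g :: "'a \<Rightarrow> real"
  assumes M: "prob_space M" and l: "0 < l" and g: "g \<in> borel_measurable M"
    and diff: "\<And>y y'. y \<in> space M \<Longrightarrow> y' \<in> space M \<Longrightarrow> g y - g y' \<le> w"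
  shows "(\<integral>\<^sup>+y. ennreal (exp (l * (g y - (\<integral>z. g z \<partial>M)))) \<partial>M) \<le> ennreal (exp (l\<^sup>2 * w\<^sup>2 / 8))"
proof -
  interpret prob_space M by fact
  define a where "a = Inf (g ` space M)"
  have bdd: "bdd_below (g ` space M)"
  proof -
    obtain y0 where "y0 \<in> space M" using not_empty by blast
    then have "g y0 - w \<le> g y" if "y \<in> space M" for y
      using diff[OF _ that, of y0] by simp
    then show ?thesis by (auto simp: bdd_below_def)
  qed
  have "g y \<in> {a..a + w}" if y: "y \<in> space M" for y
  proof -
    have "g y - w \<le> g y'" if "y' \<in> space M" for y'
      using diff[OF y that] by simp
    then have "g y - w \<le> a"
      unfolding a_def using not_empty by (auto intro!: cInf_greatest)
    moreover have "a \<le> g y"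
      unfolding a_def using y bdd by (auto intro!: cInf_lower)
    ultimately show ?thesis by simp
  qed
  then interpret interval_bounded_random_variable M g a "a + w"
    using g by unfold_locales auto
  show ?thesis
    using Hoeffdings_lemma_nn_integral[OF l] by simp
qed

lemma measurable_sample_space_Suc_update:
  assumes "f \<in> borel_measurable (sample_space M (Suc n))" "x \<in> space (sample_space M n)"
  shows "(\<lambda>y. f (x(n := y))) \<in> borel_measurable M"
proof -
  have "x \<in> space (PiM {..<n} (\<lambda>_. M))" "f \<in> borel_measurable (PiM (insert n {..<n}) (\<lambda>_. M))"
    using assms by (simp_all add: sample_space_def lessThan_Suc)
  from measurable_compose[OF measurable_component_update[OF this(1), of n] this(2)]
  show ?thesis by simp
qed

lemma integrable_sample_space_Suc_update:
  assumes M: "prob_space M" and f: "f \<in> borel_measurable (sample_space M (Suc n))"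
    and diff: "bounded_differences M (Suc n) f w" and x: "x \<in> space (sample_space M n)"
  shows "integrable M (\<lambda>y. f (x(n := y)))"
proof -
  interpret prob_space M by fact
  obtain B where "\<And>x. x \<in> space (sample_space M (Suc n)) \<Longrightarrow> \<bar>f x\<bar> \<le> B"
    using bounded_differences_imp_bounded[OF diff] by blast
  then show ?thesis
    using measurable_sample_space_Suc_update[OF f x] sample_space_Suc_fun_upd[OF x]
    by (intro integrable_const_bound[where B = B]) auto
qed

lemma measurable_integral_last:
  fixes f :: "(nat \<Rightarrow> 'a) \<Rightarrow> real"
  assumes M: "prob_space M" and f: "f \<in> borel_measurable (sample_space M (Suc n))"
  shows "(\<lambda>x. \<integral>y. f (x(n := y)) \<partial>M) \<in> borel_measurable (sample_space M n)"
proof -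
  have "f \<in> borel_measurable (PiM (insert n {..<n}) (\<lambda>_. M))"
    using f by (simp add: sample_space_def lessThan_Suc)
  from measurable_compose[OF measurable_add_dim[of n "{..<n}" "\<lambda>_. M"] this]
  have "(\<lambda>(x, y). f (x(n := y))) \<in> borel_measurable (sample_space M n \<Otimes>\<^sub>M M)"
    by (simp add: split_beta' sample_space_def)
  then show ?thesis
    by (rule sigma_finite_measure.borel_measurable_lebesgue_integral[OF prob_space_imp_sigma_finite[OF M]])
qed

lemma bounded_differences_integral_last:
  assumes M: "prob_space M" and f: "f \<in> borel_measurable (sample_space M (Suc n))"
    and diff: "bounded_differences M (Suc n) f w"
  shows "bounded_differences M n (\<lambda>x. \<integral>z. f (x(n := z)) \<partial>M) w"
  unfolding bounded_differences_def
proof safe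
  interpret prob_space M by fact
  fix k x y y' assume k: "k < n" and x: "x \<in> space (sample_space M n)"
    and y: "y \<in> space M" and y': "y' \<in> space M"
  have int: "integrable M (\<lambda>z. f (x(k := u, n := z)))" if "u \<in> space M" for u
    using integrable_sample_space_Suc_update[OF M f diff sample_space_fun_upd[OF x that k]] .
  have "f (x(k := y, n := z)) - f (x(k := y', n := z)) \<le> w" if z: "z \<in> space M" for z
  proof -
    have "x(k := y, n := z) = (x(n := z))(k := y)" "x(k := y', n := z) = (x(n := z))(k := y')"
      using k by (auto simp: fun_upd_twist)
    then show ?thesis
      using bounded_differencesD[OF diff _ sample_space_Suc_fun_upd[OF x z] y y'] k by simp
  qed
  then have "(\<integral>z. f (x(k := y, n := z)) - f (x(k := y', n := z)) \<partial>M) \<le> (\<integral>z. w \<partial>M)"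
    using int[OF y] int[OF y'] by (intro integral_mono) auto
  then show "(\<integral>z. f ((x(k := y))(n := z)) \<partial>M) - (\<integral>z. f ((x(k := y'))(n := z)) \<partial>M) \<le> w"
    using int[OF y] int[OF y'] by (simp add: prob_space)
qed

lemma nn_integral_exp_update_last_le:
  assumes M: "prob_space M" and l: "0 < l" and f: "f \<in> borel_measurable (sample_space M (Suc n))"
    and diff: "bounded_differences M (Suc n) f w" and x: "x \<in> space (sample_space M n)"
  shows "(\<integral>\<^sup>+y. ennreal (exp (l * (f (x(n := y)) - E))) \<partial>M)
    \<le> ennreal (exp (l * ((\<integral>z. f (x(n := z)) \<partial>M) - E))) * ennreal (exp (l\<^sup>2 * w\<^sup>2 / 8))"
proof -
  let ?g = "\<lambda>y. f (x(n := y))"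
  let ?m = "\<integral>z. f (x(n := z)) \<partial>M"
  have g: "?g \<in> borel_measurable M"
    by (rule measurable_sample_space_Suc_update[OF f x])
  have "?g y - ?g y' \<le> w" if "y \<in> space M" "y' \<in> space M" for y y'
    using bounded_differencesD[OF diff lessI sample_space_Suc_fun_upd[OF x that(1)] that]
    by (simp only: fun_upd_upd)
  then have hoeffding: "(\<integral>\<^sup>+y. ennreal (exp (l * (?g y - ?m))) \<partial>M) \<le> ennreal (exp (l\<^sup>2 * w\<^sup>2 / 8))"
    by (rule Hoeffdings_lemma_bounded_differences[OF M l g])
  have "(\<integral>\<^sup>+y. ennreal (exp (l * (?g y - E))) \<partial>M) =
      (\<integral>\<^sup>+y. ennreal (exp (l * (?m - E))) * ennreal (exp (l * (?g y - ?m))) \<partial>M)"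
    by (intro nn_integral_cong) (simp add: ennreal_mult[symmetric] exp_add[symmetric] algebra_simps)
  also have "\<dots> = ennreal (exp (l * (?m - E))) * (\<integral>\<^sup>+y. ennreal (exp (l * (?g y - ?m))) \<partial>M)"
    by (rule nn_integral_cmult) (use g in measurable)
  also have "\<dots> \<le> ennreal (exp (l * (?m - E))) * ennreal (exp (l\<^sup>2 * w\<^sup>2 / 8))"
    by (intro mult_left_mono hoeffding) auto
  finally show ?thesis .
qed

lemma mcdiarmid_nn_integral_exp:
  assumes M: "prob_space M" and l: "0 < l"
    and f: "f \<in> borel_measurable (sample_space M n)" and diff: "bounded_differences M n f w"
  shows "(\<integral>\<^sup>+x. ennreal (exp (l * (f x - (\<integral>x. f x \<partial>sample_space M n)))) \<partial>sample_space M n)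
    \<le> ennreal (exp (l\<^sup>2 * real n * w\<^sup>2 / 8))"
  using f diff
proof (induction n arbitrary: f)
  case 0
  show ?case
    by (simp add: sample_space_def PiM_empty nn_integral_count_space_finite
        lebesgue_integral_count_space_finite)
next
  case (Suc n)
  interpret P: product_prob_space "\<lambda>_::nat. M" UNIV
    by (simp add: product_prob_space_def product_sigma_finite_def product_prob_space_axioms_def
        M prob_space_imp_sigma_finite)
  let ?S = "sample_space M n"
  define C where "C = exp (l\<^sup>2 * w\<^sup>2 / 8)"
  define f1 where "f1 x = (\<integral>y. f (x(n := y)) \<partial>M)" for x
  define E where "E = (\<integral>x. f1 x \<partial>?S)"
  have f_insert: "f \<in> borel_measurable (PiM (insert n {..<n}) (\<lambda>_. M))"
    using Suc.prems(1) by (simp add: sample_space_def lessThan_Suc)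
  have f1_meas: "f1 \<in> borel_measurable ?S"
    unfolding f1_def by (rule measurable_integral_last[OF M Suc.prems(1)])
  have f1_diff: "bounded_differences M n f1 w"
    unfolding f1_def by (rule bounded_differences_integral_last[OF M Suc.prems])
  have E_eq: "(\<integral>x. f x \<partial>sample_space M (Suc n)) = E"
    unfolding E_def f1_def sample_space_def lessThan_Suc
    using bounded_differences_integrable[OF M Suc.prems] f_insert
    by (intro P.product_integral_insert) (auto simp: sample_space_def lessThan_Suc)
  have step: "(\<integral>\<^sup>+y. ennreal (exp (l * (f (x(n := y)) - E))) \<partial>M) \<le> ennreal (exp (l * (f1 x - E))) * C"
    if "x \<in> space ?S" for x
    unfolding f1_def C_def by (rule nn_integral_exp_update_last_le[OF M l Suc.prems that])
  have "(\<integral>\<^sup>+x. ennreal (exp (l * (f x - E))) \<partial>sample_space M (Suc n)) =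
      (\<integral>\<^sup>+x. (\<integral>\<^sup>+y. ennreal (exp (l * (f (x(n := y)) - E))) \<partial>M) \<partial>?S)"
    unfolding sample_space_def lessThan_Suc using f_insert by (intro P.product_nn_integral_insert) auto
  also have "\<dots> \<le> (\<integral>\<^sup>+x. ennreal (exp (l * (f1 x - E))) * C \<partial>?S)"
    by (intro nn_integral_mono step)
  also have "\<dots> = (\<integral>\<^sup>+x. ennreal (exp (l * (f1 x - E))) \<partial>?S) * C"
    by (rule nn_integral_multc) (use f1_meas in measurable)
  also have "\<dots> \<le> ennreal (exp (l\<^sup>2 * real n * w\<^sup>2 / 8)) * C"
    unfolding E_def by (intro mult_right_mono Suc.IH[OF f1_meas f1_diff]) auto
  also have "\<dots> = ennreal (exp (l\<^sup>2 * real (Suc n) * w\<^sup>2 / 8))"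
    by (simp add: C_def ennreal_mult[symmetric] exp_add[symmetric] algebra_simps add_divide_distrib)
  finally show ?case
    by (simp add: E_eq)
qed

section \<open>Bernstein's inequality and the choice of \<open>\<lambda>\<close>\<close>

lemma bernstein_nn_integral_exp:
  fixes h :: "'a \<Rightarrow> real"
  assumes M: "prob_space M" and h: "h \<in> borel_measurable M"
    and range: "\<And>y. y \<in> space M \<Longrightarrow> 0 \<le> h y \<and> h y \<le> b"
    and lam: "0 \<le> lam" "lam * b < 3"
  shows "(\<integral>\<^sup>+y. ennreal (exp (lam * ((\<integral>z. h z \<partial>M) - h y)
            - bernstein_coeff (lam * b) * lam\<^sup>2 * hvar M h)) \<partial>M) \<le> 1"
proof -
  interpret prob_space M by fact
  define m where "m = (\<integral>z. h z \<partial>M)"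
  define K where "K = bernstein_coeff (lam * b) * lam\<^sup>2 * hvar M h"
  have b: "0 \<le> b" using range not_empty by fastforce
  have bounded: "\<bar>h y\<bar> \<le> b" if "y \<in> space M" for y
    using range[OF that] by simp
  have int_h: "integrable M h"
    using h bounded by (intro integrable_const_bound[where B = b]) auto
  have m: "0 \<le> m" "m \<le> b"
    using integral_mono[of M h "\<lambda>_. b"] int_h range prob_space
    by (auto simp: m_def intro!: integral_nonneg)
  have "(h y - m)\<^sup>2 \<le> b\<^sup>2" if "y \<in> space M" for y
    using abs_le_square_iff[of "h y - m" b] range[OF that] m b by auto
  then have int_sq: "integrable M (\<lambda>y. (h y - m)\<^sup>2)"
    using h by (intro integrable_const_bound[where B = "b\<^sup>2"]) auto
  have exponent_le: "lam * (m - h y) \<le> lam * b" if "y \<in> space M" for y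
    using range[OF that] m lam by (intro mult_left_mono) auto
  then have int_exp: "integrable M (\<lambda>y. exp (lam * (m - h y)))"
    using h by (intro integrable_const_bound[where B = "exp (lam * b)"]) auto
  have "(\<integral>y. exp (lam * (m - h y)) \<partial>M)
      \<le> (\<integral>y. 1 + lam * (m - h y) + bernstein_coeff (lam * b) * (lam * (m - h y))\<^sup>2 \<partial>M)"
    using int_h int_sq int_exp exponent_le lam b
    by (intro integral_mono exp_le_bernstein) (auto simp: power_mult_distrib power2_commute)
  also have "\<dots> = (\<integral>y. 1 + lam * (m - h y) \<partial>M) + (\<integral>y. bernstein_coeff (lam * b) * lam\<^sup>2 * (h y - m)\<^sup>2 \<partial>M)"
    using int_h int_sq
    by (simp add: power_mult_distrib power2_commute mult.assoc mult.left_commute[of _ "lam\<^sup>2"])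
  also have "\<dots> = 1 + K"
    using int_h prob_space by (simp add: K_def m_def hvar_def)
  also have "\<dots> \<le> exp K"
    by (rule exp_ge_add_one_self)
  finally have "(\<integral>y. exp (lam * (m - h y) - K) \<partial>M) \<le> 1"
    by (simp add: exp_diff)
  moreover have "(\<integral>\<^sup>+y. ennreal (exp (lam * (m - h y) - K)) \<partial>M) = ennreal (\<integral>y. exp (lam * (m - h y) - K) \<partial>M)"
    using int_exp by (intro nn_integral_eq_integral) (auto simp: exp_diff)
  ultimately show ?thesis
    by (simp add: m_def K_def ennreal_le_1)
qed

lemma bernstein_sample_nn_integral_exp:
  fixes h :: "'a \<Rightarrow> real"
  assumes M: "prob_space M" and n: "0 < n" and h: "h \<in> borel_measurable M"
    and range: "\<And>y. y \<in> space M \<Longrightarrow> 0 \<le> h y \<and> h y \<le> b"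
    and lam: "0 \<le> lam" "lam * b < 3"
  shows "(\<integral>\<^sup>+x. ennreal (exp (real n * (lam * gen_gap M n h x
            - bernstein_coeff (lam * b) * lam\<^sup>2 * hvar M h))) \<partial>sample_space M n) \<le> 1"
proof -
  interpret P: product_prob_space "\<lambda>_::nat. M" UNIV
    by (simp add: product_prob_space_def product_sigma_finite_def product_prob_space_axioms_def
        M prob_space_imp_sigma_finite)
  define m where "m = (\<integral>z. h z \<partial>M)"
  define K where "K = bernstein_coeff (lam * b) * lam\<^sup>2 * hvar M h"
  have "real n * (lam * gen_gap M n h x - K) = (\<Sum>i<n. lam * (m - h (x i)) - K)" for x
  proof -
    have "(\<Sum>i<n. lam * (m - h (x i)) - K) = real n * (lam * m) - lam * (\<Sum>i<n. h (x i)) - real n * K"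
      by (simp add: sum_subtractf right_diff_distrib sum_distrib_left)
    also have "\<dots> = real n * (lam * gen_gap M n h x - K)"
      using n by (simp add: gen_gap_def m_def field_simps)
    finally show ?thesis by simp
  qed
  then have "(\<integral>\<^sup>+x. ennreal (exp (real n * (lam * gen_gap M n h x - K))) \<partial>sample_space M n) =
      (\<integral>\<^sup>+x. (\<Prod>i\<in>{..<n}. ennreal (exp (lam * (m - h (x i)) - K))) \<partial>PiM {..<n} (\<lambda>_. M))"
    by (simp add: sample_space_def exp_sum prod_ennreal)
  also have "\<dots> = (\<Prod>i\<in>{..<n}. (\<integral>\<^sup>+y. ennreal (exp (lam * (m - h y) - K)) \<partial>M))"
    using h by (intro P.product_nn_integral_prod) auto
  also have "\<dots> \<le> 1"
    using bernstein_nn_integral_exp[OF M h range lam] by (intro prod_le_1) (simp add: m_def K_def)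
  finally show ?thesis
    by (simp add: K_def)
qed

lemma (in prob_space) exp_integral_le_nn_integral_exp:
  assumes "integrable M f" "integrable M (\<lambda>x. exp (f x))"
  shows "ennreal (exp (\<integral>x. f x \<partial>M)) \<le> (\<integral>\<^sup>+x. ennreal (exp (f x)) \<partial>M)"
proof -
  have "exp (\<integral>x. f x \<partial>M) \<le> (\<integral>x. exp (f x) \<partial>M)"
    using assms exp_convex by (intro jensens_inequality[where I = UNIV]) auto
  also have "\<dots> = enn2real (\<integral>\<^sup>+x. ennreal (exp (f x)) \<partial>M)"
    using assms(2) by (simp add: nn_integral_eq_integral)
  finally show ?thesis
    using assms(2) by (simp add: nn_integral_eq_integral)
qed

lemma nn_integral_exp_half_plus_le:
  assumes P: "P \<in> borel_measurable N" and G: "G \<in> borel_measurable N"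
    and P_le: "(\<integral>\<^sup>+x. ennreal (exp (P x)) \<partial>N) \<le> 1"
    and G_le: "(\<integral>\<^sup>+x. ennreal (exp (2 * (G x - E))) \<partial>N) \<le> ennreal (exp (2 * C))"
  shows "(\<integral>\<^sup>+x. ennreal (exp (P x / 2 - C + G x)) \<partial>N) \<le> ennreal (exp E)"
proof -
  have pointwise: "exp (P x / 2 - C + G x)
      \<le> exp E / 2 * exp (P x) + exp E / 2 * exp (- 2 * C) * exp (2 * (G x - E))" for x
  proof -
    define a where "a = exp (P x / 2)"
    define b where "b = exp (G x - E - C)"
    have "exp (P x / 2 - C + G x) = exp E * (a * b)"
      by (simp add: a_def b_def exp_add[symmetric] exp_diff[symmetric] algebra_simps)
    also have "\<dots> \<le> exp E * ((a\<^sup>2 + b\<^sup>2) / 2)"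
      using sum_squares_bound[of a b] by (intro mult_left_mono) auto
    also have "\<dots> = exp E / 2 * exp (P x) + exp E / 2 * exp (- 2 * C) * exp (2 * (G x - E))"
      by (simp add: a_def b_def power2_eq_square exp_add[symmetric] algebra_simps add_divide_distrib)
    finally show ?thesis .
  qed
  have "(\<integral>\<^sup>+x. ennreal (exp (P x / 2 - C + G x)) \<partial>N) \<le>
      (\<integral>\<^sup>+x. ennreal (exp E / 2) * ennreal (exp (P x))
        + ennreal (exp E / 2 * exp (- 2 * C)) * ennreal (exp (2 * (G x - E))) \<partial>N)"
    using pointwise by (intro nn_integral_mono)
      (simp add: ennreal_mult[symmetric] ennreal_plus[symmetric] del: ennreal_plus)
  also have "\<dots> = ennreal (exp E / 2) * (\<integral>\<^sup>+x. ennreal (exp (P x)) \<partial>N)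
      + ennreal (exp E / 2 * exp (- 2 * C)) * (\<integral>\<^sup>+x. ennreal (exp (2 * (G x - E))) \<partial>N)"
    using P G by (simp add: nn_integral_add nn_integral_cmult)
  also have "\<dots> \<le> ennreal (exp E / 2) * 1 + ennreal (exp E / 2 * exp (- 2 * C)) * ennreal (exp (2 * C))"
    by (intro add_mono mult_left_mono P_le G_le) auto
  also have "\<dots> = ennreal (exp E)"
    by (simp add: ennreal_mult[symmetric] ennreal_plus[symmetric] exp_add[symmetric] del: ennreal_plus)
  finally show ?thesis .
qed

lemma gibbs_exponent_nn_integral_le:
  fixes h :: "'a \<Rightarrow> real" and G :: "(nat \<Rightarrow> 'a) \<Rightarrow> real"
  assumes M: "prob_space M" and n: "0 < n" and h: "h \<in> borel_measurable M"
    and range: "\<And>y. y \<in> space M \<Longrightarrow> 0 \<le> h y \<and> h y \<le> b"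
    and lam: "0 \<le> lam" "lam * b < 3"
    and G: "G \<in> borel_measurable (sample_space M n)" and G_diff: "bounded_differences M n G (2 * c)"
  shows "(\<integral>\<^sup>+x. ennreal (exp (real n * (lam * gen_gap M n h x
              - bernstein_coeff (lam * b) * lam\<^sup>2 * hvar M h) / 2 - real n * c\<^sup>2 + G x)) \<partial>sample_space M n)
    \<le> (\<integral>\<^sup>+x. ennreal (exp (G x)) \<partial>sample_space M n)"
proof -
  interpret S: prob_space "sample_space M n"
    using M by (rule prob_space_sample_space)
  define E where "E = (\<integral>x. G x \<partial>sample_space M n)"
  have P: "(\<lambda>x. real n * (lam * gen_gap M n h x - bernstein_coeff (lam * b) * lam\<^sup>2 * hvar M h))
      \<in> borel_measurable (sample_space M n)"
    unfolding gen_gap_def sample_space_def using h by measurable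
  have "(\<integral>\<^sup>+x. ennreal (exp (2 * (G x - E))) \<partial>sample_space M n) \<le> ennreal (exp (2\<^sup>2 * real n * (2 * c)\<^sup>2 / 8))"
    unfolding E_def by (rule mcdiarmid_nn_integral_exp[OF M _ G G_diff]) simp
  also have "2\<^sup>2 * real n * (2 * c)\<^sup>2 / 8 = 2 * (real n * c\<^sup>2)"
    by (simp add: power2_eq_square)
  finally have mcdiarmid: "(\<integral>\<^sup>+x. ennreal (exp (2 * (G x - E))) \<partial>sample_space M n) \<le> ennreal (exp (2 * (real n * c\<^sup>2)))" .
  have "(\<integral>\<^sup>+x. ennreal (exp (real n * (lam * gen_gap M n h x
              - bernstein_coeff (lam * b) * lam\<^sup>2 * hvar M h) / 2 - real n * c\<^sup>2 + G x)) \<partial>sample_space M n)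
      \<le> ennreal (exp E)"
    using nn_integral_exp_half_plus_le[OF P G bernstein_sample_nn_integral_exp[OF M n h range lam] mcdiarmid]
    by simp
  also have "\<dots> \<le> (\<integral>\<^sup>+x. ennreal (exp (G x)) \<partial>sample_space M n)"
  proof -
    obtain B where B: "\<And>x. x \<in> space (sample_space M n) \<Longrightarrow> \<bar>G x\<bar> \<le> B"
      using bounded_differences_imp_bounded[OF G_diff] by blast
    then have "integrable (sample_space M n) (\<lambda>x. exp (G x))"
      using G by (intro S.integrable_const_bound[where B = "exp B"]) (auto simp: abs_le_iff)
    then show ?thesis
      unfolding E_def using bounded_differences_integrable[OF M G G_diff]
      by (rule S.exp_integral_le_nn_integral_exp[rotated])
  qed
  finally show ?thesis .
qed

lemma bernstein_lambda_choice:
  fixes A b v d :: real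
  assumes A: "0 < A" and b: "0 < b" and v: "0 \<le> v"
  defines "lam \<equiv> 2 * A / (sqrt (v * A) + b * A)"
  shows "0 < lam" "lam * b \<le> 2"
    and "2 * sqrt (v * A) + b * A < d \<Longrightarrow> 2 * A < lam * d - bernstein_coeff (lam * b) * lam\<^sup>2 * v"
proof -
  define s where "s = sqrt (v * A)"
  define D where "D = s + b * A"
  have s: "0 \<le> s" "s\<^sup>2 = v * A"
    unfolding s_def using v A by simp_all
  have D: "0 < D" "lam = 2 * A / D"
    using s b A by (simp_all add: D_def lam_def s_def add_nonneg_pos)
  show lam_pos: "0 < lam"
    using A D by simp
  have "2 * A * b \<le> 2 * D"
    using s by (simp add: D_def)
  then show "lam * b \<le> 2"
    unfolding D(2) using D(1) by (simp add: field_simps)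
  have q: "0 < 3 * s + b * A"
    using s b A by (simp add: add_nonneg_pos)
  have t: "3 - lam * b = (3 * s + b * A) / D"
    unfolding D(2) using D(1) by (simp add: field_simps D_def)
  have "bernstein_coeff (lam * b) * lam = 3 / (2 * ((3 * s + b * A) / D)) * (2 * A / D)"
    unfolding bernstein_coeff_def t by (simp only: D(2))
  also have "\<dots> = 3 * A / (3 * s + b * A)"
    using D(1) q by (simp add: field_simps)
  finally have coeff: "bernstein_coeff (lam * b) * lam = 3 * A / (3 * s + b * A)" .
  have "3 * A * v / (3 * s + b * A) \<le> s"
  proof -
    have "3 * A * v = 3 * s\<^sup>2"
      using s by (simp add: algebra_simps)
    also have "\<dots> \<le> s * (3 * s + b * A)"
      using s(1) b A by (simp add: power2_eq_square algebra_simps)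
    finally show ?thesis
      using q by (simp add: divide_le_eq)
  qed
  then have "lam * ((bernstein_coeff (lam * b) * lam) * v) \<le> lam * s"
    unfolding coeff using lam_pos by (intro mult_left_mono) auto
  then have "bernstein_coeff (lam * b) * lam\<^sup>2 * v \<le> lam * s"
    by (simp add: power2_eq_square algebra_simps)
  moreover assume "2 * sqrt (v * A) + b * A < d"
  then have "lam * (2 * s + b * A) < lam * d"
    using lam_pos by (simp add: s_def)
  moreover have "lam * (2 * s + b * A) = lam * s + 2 * A"
    unfolding D(2) using D(1) by (simp add: field_simps D_def)
  ultimately show "2 * A < lam * d - bernstein_coeff (lam * b) * lam\<^sup>2 * v"
    by linarith
qed

lemma bernstein_exponent_gt_if_gap_gt:
  fixes c L b v d :: real and n :: nat
  defines "A \<equiv> c\<^sup>2 + L / real n"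
  defines "lam \<equiv> 2 * A / (sqrt (v * A) + b * A)"
  assumes n: "0 < n" and A: "0 < A" and b: "0 < b" and v: "0 \<le> v"
    and gap: "2 * sqrt (v * A) + b * A < d"
  shows "L < real n * (lam * d - bernstein_coeff (lam * b) * lam\<^sup>2 * v) / 2 - real n * c\<^sup>2"
proof -
  have "2 * (real n * A) < real n * (lam * d - bernstein_coeff (lam * b) * lam\<^sup>2 * v)"
    using bernstein_lambda_choice(3)[OF A b v gap] n by (simp add: lam_def)
  moreover have "real n * A = real n * c\<^sup>2 + L"
    using n by (simp add: A_def field_simps)
  ultimately show ?thesis
    by linarith
qed

section \<open>Markov's inequality for a disintegrated law\<close>

lemma nn_integral_nn_integral_measurable:
  fixes u :: "'h \<Rightarrow> 'b \<Rightarrow> ennreal"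
  assumes "sigma_finite_measure Pr" "(\<lambda>p. u (fst p) (snd p)) \<in> borel_measurable (Pr \<Otimes>\<^sub>M X)"
  shows "(\<lambda>x. \<integral>\<^sup>+h. u h x \<partial>Pr) \<in> borel_measurable X"
proof -
  have "(\<lambda>(x, h). u h x) \<in> borel_measurable (X \<Otimes>\<^sub>M Pr)"
    using assms(2) measurable_pair_swap_iff[of "\<lambda>p. u (fst p) (snd p)" Pr X borel]
    by (simp add: split_beta')
  then show ?thesis
    by (rule sigma_finite_measure.borel_measurable_nn_integral[OF assms(1)])
qed

lemma markov_density_tail_le:
  fixes g F :: "'h \<Rightarrow> 'b \<Rightarrow> real"
  assumes X: "prob_space X" and Pr: "sigma_finite_measure Pr"
    and g: "(\<lambda>p. g (fst p) (snd p)) \<in> borel_measurable (Pr \<Otimes>\<^sub>M X)"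
    and F: "(\<lambda>p. F (fst p) (snd p)) \<in> borel_measurable (Pr \<Otimes>\<^sub>M X)"
    and normalized: "\<And>x. x \<in> space X \<Longrightarrow> (\<integral>\<^sup>+h. ennreal (exp (g h x)) \<partial>Pr) = 1"
    and moment: "\<And>h. h \<in> space Pr \<Longrightarrow>
      (\<integral>\<^sup>+x. ennreal (exp (F h x + g h x)) \<partial>X) \<le> (\<integral>\<^sup>+x. ennreal (exp (g h x)) \<partial>X)"
  shows "(\<integral>\<^sup>+x. (\<integral>\<^sup>+h. ennreal (exp (g h x)) * indicator {h. L < F h x} h \<partial>Pr) \<partial>X) \<le> ennreal (exp (- L))"
proof -
  interpret X: prob_space X by fact
  interpret PX: pair_sigma_finite Pr X
    using Pr by (intro pair_sigma_finite.intro X.sigma_finite_measure_axioms)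
  let ?e = "\<lambda>h x. ennreal (exp (F h x + g h x))"
  have e: "(\<lambda>p. ?e (fst p) (snd p)) \<in> borel_measurable (Pr \<Otimes>\<^sub>M X)"
    using g F by measurable
  have tail: "ennreal (exp (g h x)) * indicator {h. L < F h x} h \<le> ennreal (exp (- L)) * ?e h x" for h x
    by (auto simp: indicator_def ennreal_mult[symmetric] exp_add[symmetric] intro!: ennreal_leI)
  have "(\<integral>\<^sup>+x. (\<integral>\<^sup>+h. ennreal (exp (g h x)) * indicator {h. L < F h x} h \<partial>Pr) \<partial>X)
      \<le> (\<integral>\<^sup>+x. (\<integral>\<^sup>+h. ennreal (exp (- L)) * ?e h x \<partial>Pr) \<partial>X)"
    by (intro nn_integral_mono tail)
  also have "\<dots> = (\<integral>\<^sup>+x. ennreal (exp (- L)) * (\<integral>\<^sup>+h. ?e h x \<partial>Pr) \<partial>X)"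
    using measurable_Pair1[OF e] by (intro nn_integral_cong nn_integral_cmult) simp
  also have "\<dots> = ennreal (exp (- L)) * (\<integral>\<^sup>+x. (\<integral>\<^sup>+h. ?e h x \<partial>Pr) \<partial>X)"
    by (rule nn_integral_cmult) (rule nn_integral_nn_integral_measurable[OF Pr e])
  also have "(\<integral>\<^sup>+x. (\<integral>\<^sup>+h. ?e h x \<partial>Pr) \<partial>X) = (\<integral>\<^sup>+h. (\<integral>\<^sup>+x. ?e h x \<partial>X) \<partial>Pr)"
    using e by (intro PX.Fubini') (simp add: split_beta')
  also have "\<dots> \<le> (\<integral>\<^sup>+h. (\<integral>\<^sup>+x. ennreal (exp (g h x)) \<partial>X) \<partial>Pr)"
    by (intro nn_integral_mono moment)
  also have "\<dots> = (\<integral>\<^sup>+x. (\<integral>\<^sup>+h. ennreal (exp (g h x)) \<partial>Pr) \<partial>X)"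
    using g by (intro PX.Fubini'[symmetric]) (simp add: split_beta')
  also have "\<dots> = 1"
    using X.emeasure_space_1 by (simp add: normalized nn_integral_cong[of X _ "\<lambda>_. 1"])
  finally show ?thesis
    by (simp add: mult_left_mono)
qed

lemma markov_density_ge:
  fixes g F :: "'h \<Rightarrow> 'b \<Rightarrow> real"
  assumes X: "prob_space X" and Pr: "sigma_finite_measure Pr"
    and g: "(\<lambda>p. g (fst p) (snd p)) \<in> borel_measurable (Pr \<Otimes>\<^sub>M X)"
    and F: "(\<lambda>p. F (fst p) (snd p)) \<in> borel_measurable (Pr \<Otimes>\<^sub>M X)"
    and normalized: "\<And>x. x \<in> space X \<Longrightarrow> (\<integral>\<^sup>+h. ennreal (exp (g h x)) \<partial>Pr) = 1"
    and moment: "\<And>h. h \<in> space Pr \<Longrightarrow>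
      (\<integral>\<^sup>+x. ennreal (exp (F h x + g h x)) \<partial>X) \<le> (\<integral>\<^sup>+x. ennreal (exp (g h x)) \<partial>X)"
  shows "ennreal (1 - exp (- L))
    \<le> (\<integral>\<^sup>+x. emeasure (density Pr (\<lambda>h. ennreal (exp (g h x)))) {h \<in> space Pr. F h x \<le> L} \<partial>X)"
proof -
  interpret X: prob_space X by fact
  define good where "good x = (\<integral>\<^sup>+h. ennreal (exp (g h x)) * indicator {h. F h x \<le> L} h \<partial>Pr)" for x
  define bad where "bad x = (\<integral>\<^sup>+h. ennreal (exp (g h x)) * indicator {h. L < F h x} h \<partial>Pr)" for x
  have good_meas: "good \<in> borel_measurable X" and bad_meas: "bad \<in> borel_measurable X"
    unfolding good_def bad_def using g F by (auto intro!: nn_integral_nn_integral_measurable[OF Pr])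
  have "good x + bad x = 1" if x: "x \<in> space X" for x
  proof -
    have "good x + bad x = (\<integral>\<^sup>+h. ennreal (exp (g h x)) \<partial>Pr)"
      unfolding good_def bad_def using measurable_Pair1[OF g x] measurable_Pair1[OF F x]
      by (subst nn_integral_add[symmetric]) (auto intro!: nn_integral_cong simp: indicator_def)
    then show ?thesis
      using normalized[OF x] by simp
  qed
  then have "1 = (\<integral>\<^sup>+x. good x \<partial>X) + (\<integral>\<^sup>+x. bad x \<partial>X)"
    using X.emeasure_space_1 good_meas bad_meas
    by (simp add: nn_integral_add[symmetric] nn_integral_cong[of X _ "\<lambda>_. 1"])
  also have "\<dots> \<le> (\<integral>\<^sup>+x. good x \<partial>X) + ennreal (exp (- L))"
    unfolding bad_def using markov_density_tail_le[OF assms] by (rule add_left_mono)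
  finally have "ennreal (1 - exp (- L)) \<le> (\<integral>\<^sup>+x. good x \<partial>X)"
    by (simp add: ennreal_minus[symmetric] ennreal_minus_le_iff add.commute)
  also have "\<dots> = (\<integral>\<^sup>+x. emeasure (density Pr (\<lambda>h. ennreal (exp (g h x)))) {h \<in> space Pr. F h x \<le> L} \<partial>X)"
  proof (intro nn_integral_cong)
    fix x assume x: "x \<in> space X"
    have "(\<lambda>h. F h x) \<in> borel_measurable Pr" and gx: "(\<lambda>h. g h x) \<in> borel_measurable Pr"
      using measurable_Pair1[OF F x] measurable_Pair1[OF g x] by simp_all
    then have A: "{h \<in> space Pr. F h x \<le> L} \<in> sets Pr"
      by measurable
    have "emeasure (density Pr (\<lambda>h. ennreal (exp (g h x)))) {h \<in> space Pr. F h x \<le> L}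
        = (\<integral>\<^sup>+h. ennreal (exp (g h x)) * indicator {h \<in> space Pr. F h x \<le> L} h \<partial>Pr)"
      by (rule emeasure_density[OF _ A]) (use gx in measurable)
    also have "\<dots> = good x"
      unfolding good_def by (intro nn_integral_cong) (simp split: split_indicator)
    finally show "good x = emeasure (density Pr (\<lambda>h. ennreal (exp (g h x)))) {h \<in> space Pr. F h x \<le> L}" ..
  qed
  finally show ?thesis .
qed

section \<open>Hamiltonians\<close>

text \<open>\<open>M\<close> is recovered from the finite measure \<open>density M f\<close> by the everywhere finite density \<open>1 / f\<close>.\<close>

lemma sigma_finite_measure_if_positive_density:
  fixes f :: "'a \<Rightarrow> real"
  assumes f: "f \<in> borel_measurable M" and pos: "\<And>x. x \<in> space M \<Longrightarrow> 0 < f x"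
    and finite: "(\<integral>\<^sup>+x. ennreal (f x) \<partial>M) \<noteq> \<infinity>"
  shows "sigma_finite_measure M"
proof -
  interpret N: finite_measure "density M f"
    using f finite by (intro finite_measureI) (simp add: emeasure_density)
  have "density (density M f) (\<lambda>x. ennreal (1 / f x)) = density M (\<lambda>x. ennreal (f x) * ennreal (1 / f x))"
    using f by (intro density_density_eq) auto
  also have "\<dots> = density M (\<lambda>_. 1)"
  proof (intro density_cong AE_I2)
    fix x assume "x \<in> space M"
    then have "0 < f x" by (rule pos)
    then show "ennreal (f x) * ennreal (1 / f x) = 1"
      by (simp flip: ennreal_mult)
  qed (use f in auto)
  finally have "density (density M f) (\<lambda>x. ennreal (1 / f x)) = M"
    by (simp add: density_1)
  moreover have "sigma_finite_measure (density (density M f) (\<lambda>x. ennreal (1 / f x)))"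
    using f by (subst N.sigma_finite_iff_density_finite) auto
  ultimately show ?thesis by simp
qed

lemma hamiltonian_section_measurable:
  assumes "is_hamiltonian Pr XS Q H" "x \<in> space XS"
  shows "(\<lambda>h. H h x) \<in> borel_measurable Pr"
  using measurable_Pair1[OF _ assms(2), of "\<lambda>(h, x). H h x"] assms(1)
  by (simp add: is_hamiltonian_def)

lemma Zfun_pos_finite:
  assumes Q: "stochastic_algorithm Pr XS Q" and H: "is_hamiltonian Pr XS Q H" and x: "x \<in> space XS"
  shows "0 < Zfun Pr H x" "Zfun Pr H x < \<infinity>"
proof -
  have Q_x: "prob_space (Q x)" "sets (Q x) = sets Pr"
    using Q x by (auto simp: stochastic_algorithm_def)
  have Hx: "(\<lambda>h. H h x) \<in> borel_measurable Pr"
    by (rule hamiltonian_section_measurable[OF H x])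
  have "1 = emeasure (Q x) (space Pr)"
    using prob_space.emeasure_space_1[OF Q_x(1)] sets_eq_imp_space_eq[OF Q_x(2)] by simp
  also have "\<dots> = (\<integral>\<^sup>+h. ennreal (exp (H h x)) / Zfun Pr H x \<partial>Pr)"
    using H x Hx by (simp add: is_hamiltonian_def emeasure_density)
  also have "\<dots> = Zfun Pr H x / Zfun Pr H x"
    using Hx by (simp add: nn_integral_divide Zfun_def)
  finally have "Zfun Pr H x / Zfun Pr H x = 1" ..
  then have "Zfun Pr H x \<noteq> 0 \<and> Zfun Pr H x \<noteq> \<top>"
    by (cases "Zfun Pr H x = 0"; cases "Zfun Pr H x = \<top>") auto
  then show "0 < Zfun Pr H x" "Zfun Pr H x < \<infinity>"
    by (auto simp: less_top zero_less_iff_neq_zero)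
qed

definition log_density :: "('x \<Rightarrow> real) measure \<Rightarrow> (('x \<Rightarrow> real) \<Rightarrow> (nat \<Rightarrow> 'x) \<Rightarrow> real)
    \<Rightarrow> ('x \<Rightarrow> real) \<Rightarrow> (nat \<Rightarrow> 'x) \<Rightarrow> real" where
  "log_density Pr H h x = H h x - ln (enn2real (Zfun Pr H x))"

lemma hamiltonian_density_log_density:
  assumes Q: "stochastic_algorithm Pr XS Q" and H: "is_hamiltonian Pr XS Q H" and x: "x \<in> space XS"
  shows "Q x = density Pr (\<lambda>h. ennreal (exp (log_density Pr H h x)))"
proof -
  obtain z where z: "Zfun Pr H x = ennreal z" "0 < z"
    using Zfun_pos_finite[OF Q H x] by (cases "Zfun Pr H x") auto
  have "ennreal (exp (H h x)) / Zfun Pr H x = ennreal (exp (log_density Pr H h x))" for h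
    using z by (simp add: log_density_def divide_ennreal exp_diff)
  then show ?thesis
    using H x by (simp add: is_hamiltonian_def)
qed

lemma nn_integral_exp_le_exp_mult:
  fixes u v :: "'a \<Rightarrow> real"
  assumes "\<And>h. h \<in> space N \<Longrightarrow> u h \<le> c + v h" "v \<in> borel_measurable N"
  shows "(\<integral>\<^sup>+h. ennreal (exp (u h)) \<partial>N) \<le> ennreal (exp c) * (\<integral>\<^sup>+h. ennreal (exp (v h)) \<partial>N)"
proof -
  have "(\<integral>\<^sup>+h. ennreal (exp (u h)) \<partial>N) \<le> (\<integral>\<^sup>+h. ennreal (exp c) * ennreal (exp (v h)) \<partial>N)"
    using assms(1) by (intro nn_integral_mono) (simp add: ennreal_mult[symmetric] exp_add[symmetric])
  also have "\<dots> = ennreal (exp c) * (\<integral>\<^sup>+h. ennreal (exp (v h)) \<partial>N)"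
    using assms(2) by (intro nn_integral_cmult) measurable
  finally show ?thesis .
qed

lemma ln_Zfun_diff_le:
  assumes Q: "stochastic_algorithm Pr XS Q" and H: "is_hamiltonian Pr XS Q H"
    and x1: "x1 \<in> space XS" and x2: "x2 \<in> space XS"
    and diff: "\<And>h. h \<in> space Pr \<Longrightarrow> H h x1 - H h x2 \<le> c"
  shows "ln (enn2real (Zfun Pr H x1)) - ln (enn2real (Zfun Pr H x2)) \<le> c"
proof -
  define z where "z x = enn2real (Zfun Pr H x)" for x
  have z: "Zfun Pr H x = ennreal (z x)" "0 < z x" if "x \<in> space XS" for x
    using Zfun_pos_finite[OF Q H that] by (auto simp: z_def enn2real_positive_iff less_top)
  have "ennreal (z x1) \<le> ennreal (exp c) * ennreal (z x2)"
    using nn_integral_exp_le_exp_mult[of Pr "\<lambda>h. H h x1" c "\<lambda>h. H h x2"] diff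
      hamiltonian_section_measurable[OF H x2] z[OF x1] z[OF x2]
    by (simp add: Zfun_def algebra_simps)
  then have "z x1 \<le> exp c * z x2"
    using z[OF x2] by (simp add: ennreal_mult[symmetric])
  then have "ln (z x1) \<le> c + ln (z x2)"
    using z[OF x1] z[OF x2] by (simp add: ln_le_cancel_iff[symmetric] ln_mult del: ln_le_cancel_iff)
  then show ?thesis
    by (simp add: z_def)
qed

lemma nn_integral_exp_log_density:
  assumes Q: "stochastic_algorithm Pr XS Q" and H: "is_hamiltonian Pr XS Q H" and x: "x \<in> space XS"
  shows "(\<integral>\<^sup>+h. ennreal (exp (log_density Pr H h x)) \<partial>Pr) = 1"
proof -
  have Q_x: "prob_space (Q x)" "sets (Q x) = sets Pr"
    using Q x by (auto simp: stochastic_algorithm_def)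
  have "(\<lambda>h. log_density Pr H h x) \<in> borel_measurable Pr"
    unfolding log_density_def using hamiltonian_section_measurable[OF H x] by measurable
  then have "(\<integral>\<^sup>+h. ennreal (exp (log_density Pr H h x)) \<partial>Pr) = emeasure (Q x) (space Pr)"
    by (simp add: hamiltonian_density_log_density[OF Q H x] emeasure_density)
  also have "\<dots> = 1"
    using prob_space.emeasure_space_1[OF Q_x(1)] sets_eq_imp_space_eq[OF Q_x(2)] by simp
  finally show ?thesis .
qed

lemma sigma_finite_hamiltonian:
  assumes Q: "stochastic_algorithm Pr XS Q" and H: "is_hamiltonian Pr XS Q H" and x: "x \<in> space XS"
  shows "sigma_finite_measure Pr"
proof (rule sigma_finite_measure_if_positive_density)
  show "(\<lambda>h. exp (log_density Pr H h x)) \<in> borel_measurable Pr"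
    unfolding log_density_def using hamiltonian_section_measurable[OF H x] by measurable
qed (use nn_integral_exp_log_density[OF assms] in auto)

lemma measurable_log_density:
  assumes Pr: "sigma_finite_measure Pr" and H: "is_hamiltonian Pr XS Q H"
  shows "(\<lambda>p. log_density Pr H (fst p) (snd p)) \<in> borel_measurable (Pr \<Otimes>\<^sub>M XS)"
proof -
  have H_meas: "(\<lambda>p. H (fst p) (snd p)) \<in> borel_measurable (Pr \<Otimes>\<^sub>M XS)"
    using H by (simp add: is_hamiltonian_def split_beta')
  then have "(\<lambda>x. Zfun Pr H x) \<in> borel_measurable XS"
    unfolding Zfun_def by (intro nn_integral_nn_integral_measurable[OF Pr]) measurable
  then show ?thesis
    unfolding log_density_def using H_meas by measurable
qed

lemma bounded_differences_log_density:
  assumes Q: "stochastic_algorithm Pr (sample_space M n) Q" and H: "is_hamiltonian Pr (sample_space M n) Q H"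
    and diff: "\<And>k h y y' x. k < n \<Longrightarrow> h \<in> space Pr \<Longrightarrow> y \<in> space M \<Longrightarrow> y' \<in> space M \<Longrightarrow>
      x \<in> space (sample_space M n) \<Longrightarrow> H h (x(k := y)) - H h (x(k := y')) \<le> c"
    and h: "h \<in> space Pr"
  shows "bounded_differences M n (log_density Pr H h) (2 * c)"
  unfolding bounded_differences_def
proof safe
  fix k x y y' assume k: "k < n" and x: "x \<in> space (sample_space M n)"
    and y: "y \<in> space M" and y': "y' \<in> space M"
  have "ln (enn2real (Zfun Pr H (x(k := y')))) - ln (enn2real (Zfun Pr H (x(k := y)))) \<le> c"
    using diff[OF k _ y' y x] sample_space_fun_upd[OF x _ k] y y'
    by (intro ln_Zfun_diff_le[OF Q H]) auto
  then show "log_density Pr H h (x(k := y)) - log_density Pr H h (x(k := y')) \<le> 2 * c"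
    using diff[OF k h y y' x] by (simp add: log_density_def)
qed

section \<open>The generalization bound\<close>

lemma measurable_mean_hypothesis:
  fixes Pr :: "('a \<Rightarrow> real) measure"
  assumes "prob_space M" "(\<lambda>(h, z). h z) \<in> borel_measurable (Pr \<Otimes>\<^sub>M M)"
  shows "(\<lambda>h. \<integral>z. h z \<partial>M) \<in> borel_measurable Pr"
  by (rule sigma_finite_measure.borel_measurable_lebesgue_integral[OF prob_space_imp_sigma_finite[OF assms(1)]])
    (use assms(2) in simp)

lemma measurable_hvar:
  fixes Pr :: "('a \<Rightarrow> real) measure"
  assumes M: "prob_space M" and hyp: "(\<lambda>(h, z). h z) \<in> borel_measurable (Pr \<Otimes>\<^sub>M M)"
  shows "(\<lambda>h. hvar M h) \<in> borel_measurable Pr"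
  unfolding hvar_def
proof (intro sigma_finite_measure.borel_measurable_lebesgue_integral prob_space_imp_sigma_finite M)
  have "(\<lambda>p. (fst p) (snd p)) \<in> borel_measurable (Pr \<Otimes>\<^sub>M M)"
    using hyp by (simp add: split_beta')
  with measurable_mean_hypothesis[OF M hyp]
  show "(\<lambda>(h, z). (h z - (\<integral>z'. h z' \<partial>M))\<^sup>2) \<in> borel_measurable (Pr \<Otimes>\<^sub>M M)"
    by (simp add: split_beta') measurable
qed

lemma measurable_gen_gap:
  fixes Pr :: "('a \<Rightarrow> real) measure"
  assumes M: "prob_space M" and hyp: "(\<lambda>(h, z). h z) \<in> borel_measurable (Pr \<Otimes>\<^sub>M M)"
  shows "(\<lambda>p. gen_gap M n (fst p) (snd p)) \<in> borel_measurable (Pr \<Otimes>\<^sub>M sample_space M n)"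
proof -
  have "(\<lambda>p. (fst p) (snd p i)) \<in> borel_measurable (Pr \<Otimes>\<^sub>M sample_space M n)" if "i < n" for i
  proof -
    have "(\<lambda>p. (fst p, snd p i)) \<in> measurable (Pr \<Otimes>\<^sub>M sample_space M n) (Pr \<Otimes>\<^sub>M M)"
      unfolding sample_space_def by measurable (use that in simp)
    from measurable_compose[OF this hyp] show ?thesis by simp
  qed
  then show ?thesis
    unfolding gen_gap_def using measurable_mean_hypothesis[OF M hyp] by measurable
qed

lemma hvar_nonneg: "0 \<le> hvar M h"
  unfolding hvar_def by (rule Bochner_Integration.integral_nonneg) simp

lemma gen_gap_bound_log_density:
  fixes M :: "'x measure" and Pr :: "('x \<Rightarrow> real) measure"
    and g :: "('x \<Rightarrow> real) \<Rightarrow> (nat \<Rightarrow> 'x) \<Rightarrow> real"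
  assumes M: "prob_space M" and n: "0 < n"
    and hyp: "(\<lambda>(h, z). h z) \<in> borel_measurable (Pr \<Otimes>\<^sub>M M)"
    and Pr: "sigma_finite_measure Pr"
    and g: "(\<lambda>p. g (fst p) (snd p)) \<in> borel_measurable (Pr \<Otimes>\<^sub>M sample_space M n)"
    and normalized: "\<And>x. x \<in> space (sample_space M n) \<Longrightarrow> (\<integral>\<^sup>+h. ennreal (exp (g h x)) \<partial>Pr) = 1"
    and g_diff: "\<And>h. h \<in> space Pr \<Longrightarrow> bounded_differences M n (g h) (2 * c)"
    and range: "\<And>h y. h \<in> space Pr \<Longrightarrow> y \<in> space M \<Longrightarrow> 0 \<le> h y \<and> h y \<le> b"
    and b: "0 < b" and \<delta>: "0 < \<delta>" "\<delta> < 1"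
  shows "ennreal (1 - \<delta>) \<le> (\<integral>\<^sup>+x. emeasure (density Pr (\<lambda>h. ennreal (exp (g h x))))
      {h \<in> space Pr. gen_gap M n h x \<le> 2 * sqrt (hvar M h * (c\<^sup>2 + ln (1 / \<delta>) / real n))
                         + b * (c\<^sup>2 + ln (1 / \<delta>) / real n)} \<partial>sample_space M n)"
proof -
  define L where "L = ln (1 / \<delta>)"
  define A where "A = c\<^sup>2 + L / real n"
  define R where "R h = 2 * sqrt (hvar M h * A) + b * A" for h
  define lam where "lam h = 2 * A / (sqrt (hvar M h * A) + b * A)" for h
  define F where "F h x = real n * (lam h * gen_gap M n h x
      - bernstein_coeff (lam h * b) * (lam h)\<^sup>2 * hvar M h) / 2 - real n * c\<^sup>2" for h x
  have A: "0 < A"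
    using \<delta> n by (simp add: A_def L_def add_nonneg_pos)
  have lam: "0 < lam h" "lam h * b \<le> 2" for h
    using bernstein_lambda_choice(1,2)[OF A b hvar_nonneg[of M h]] by (simp_all add: lam_def)
  have F_meas: "(\<lambda>p. F (fst p) (snd p)) \<in> borel_measurable (Pr \<Otimes>\<^sub>M sample_space M n)"
    unfolding F_def lam_def bernstein_coeff_def
    using measurable_hvar[OF M hyp] measurable_gen_gap[OF M hyp] by measurable
  have "(\<integral>\<^sup>+x. ennreal (exp (F h x + g h x)) \<partial>sample_space M n)
      \<le> (\<integral>\<^sup>+x. ennreal (exp (g h x)) \<partial>sample_space M n)" if h: "h \<in> space Pr" for h
    unfolding F_def add.assoc[symmetric]
    using lam[of h] measurable_Pair2[OF hyp h] measurable_Pair2[OF g h] range[OF h] g_diff[OF h]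
    by (intro gibbs_exponent_nn_integral_le[OF M n]) simp_all
  from markov_density_ge[OF prob_space_sample_space[OF M] Pr g F_meas normalized this, of L]
  have "ennreal (1 - \<delta>)
      \<le> (\<integral>\<^sup>+x. emeasure (density Pr (\<lambda>h. ennreal (exp (g h x)))) {h \<in> space Pr. F h x \<le> L} \<partial>sample_space M n)"
    using \<delta> by (simp add: L_def exp_minus)
  also have "\<dots> \<le> (\<integral>\<^sup>+x. emeasure (density Pr (\<lambda>h. ennreal (exp (g h x))))
      {h \<in> space Pr. gen_gap M n h x \<le> R h} \<partial>sample_space M n)"
  proof (intro nn_integral_mono emeasure_mono)
    fix x assume x: "x \<in> space (sample_space M n)"
    show "{h \<in> space Pr. gen_gap M n h x \<le> R h} \<in> sets (density Pr (\<lambda>h. ennreal (exp (g h x))))"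
      unfolding R_def using measurable_Pair1[OF measurable_gen_gap[OF M hyp] x] measurable_hvar[OF M hyp]
      by simp measurable
    have "L < F h x" if "R h < gen_gap M n h x" for h
      using bernstein_exponent_gt_if_gap_gt[OF n _ b hvar_nonneg, of c L] A that
      by (simp add: F_def lam_def R_def A_def)
    then show "{h \<in> space Pr. F h x \<le> L} \<subseteq> {h \<in> space Pr. gen_gap M n h x \<le> R h}"
      by (auto simp: not_le[symmetric])
  qed
  finally show ?thesis
    by (simp add: R_def A_def L_def)
qed

lemma nn_integral_gen_gap_bound_nonpos_range:
  assumes M: "prob_space M" and Q: "stochastic_algorithm Pr (sample_space M n) Q"
    and range: "\<And>h y. h \<in> space Pr \<Longrightarrow> y \<in> space M \<Longrightarrow> 0 \<le> h y \<and> h y \<le> b"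
    and b: "b \<le> 0" and A: "0 \<le> A"
  shows "(\<integral>\<^sup>+x. emeasure (Q x) {h \<in> space Pr. gen_gap M n h x \<le> 2 * sqrt (hvar M h * A) + b * A}
    \<partial>sample_space M n) = 1"
proof -
  interpret S: prob_space "sample_space M n"
    using M by (rule prob_space_sample_space)
  have zero: "h y = 0" if "h \<in> space Pr" "y \<in> space M" for h y
    using range[OF that] b by linarith
  have "gen_gap M n h x = 0 \<and> 0 \<le> 2 * sqrt (hvar M h * A) + b * A"
    if h: "h \<in> space Pr" and x: "x \<in> space (sample_space M n)" for h x
  proof -
    have "(\<integral>z. h z \<partial>M) = (\<integral>z. 0 \<partial>M)"
      using zero[OF h] by (intro Bochner_Integration.integral_cong) auto
    moreover have "(\<Sum>i<n. h (x i)) = 0"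
      using zero[OF h] x by (auto simp: sample_space_def space_PiM PiE_iff)
    moreover have "b = 0"
      using range[OF h] b prob_space.not_empty[OF M] by fastforce
    ultimately show ?thesis
      using A hvar_nonneg[of M h] by (simp add: gen_gap_def)
  qed
  then have "{h \<in> space Pr. gen_gap M n h x \<le> 2 * sqrt (hvar M h * A) + b * A} = space Pr"
    if "x \<in> space (sample_space M n)" for x
    using that by auto
  moreover have "emeasure (Q x) (space Pr) = 1" if "x \<in> space (sample_space M n)" for x
    using Q that prob_space.emeasure_space_1[of "Q x"] sets_eq_imp_space_eq[of "Q x" Pr]
    by (auto simp: stochastic_algorithm_def)
  ultimately show ?thesis
    using S.emeasure_space_1 by (simp add: nn_integral_cong[of _ _ "\<lambda>_. 1"])
qed

lemma gen_gap_bound_hamiltonian: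
  fixes M :: "'x measure" and Pr :: "('x \<Rightarrow> real) measure"
  assumes M: "prob_space M" and n: "0 < n"
    and hyp: "(\<lambda>(h, z). h z) \<in> borel_measurable (Pr \<Otimes>\<^sub>M M)"
    and Q: "stochastic_algorithm Pr (sample_space M n) Q" and H: "is_hamiltonian Pr (sample_space M n) Q H"
    and diff: "\<And>k h y y' x. k < n \<Longrightarrow> h \<in> space Pr \<Longrightarrow> y \<in> space M \<Longrightarrow> y' \<in> space M \<Longrightarrow>
      x \<in> space (sample_space M n) \<Longrightarrow> H h (x(k := y)) - H h (x(k := y')) \<le> c"
    and range: "\<And>h y. h \<in> space Pr \<Longrightarrow> y \<in> space M \<Longrightarrow> 0 \<le> h y \<and> h y \<le> b"
    and b: "0 < b" and \<delta>: "0 < \<delta>" "\<delta> < 1"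
  shows "ennreal (1 - \<delta>) \<le> (\<integral>\<^sup>+x. emeasure (Q x)
      {h \<in> space Pr. gen_gap M n h x \<le> 2 * sqrt (hvar M h * (c\<^sup>2 + ln (1 / \<delta>) / real n))
                         + b * (c\<^sup>2 + ln (1 / \<delta>) / real n)} \<partial>sample_space M n)"
    (is "_ \<le> (\<integral>\<^sup>+x. emeasure (Q x) (?good x) \<partial>_)")
proof -
  obtain x0 where "x0 \<in> space (sample_space M n)"
    using prob_space.not_empty[OF prob_space_sample_space[OF M]] by blast
  then have Pr: "sigma_finite_measure Pr"
    by (rule sigma_finite_hamiltonian[OF Q H])
  have "ennreal (1 - \<delta>) \<le> (\<integral>\<^sup>+x. emeasure (density Pr (\<lambda>h. ennreal (exp (log_density Pr H h x))))
      (?good x) \<partial>sample_space M n)"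
    by (rule gen_gap_bound_log_density[OF M n hyp Pr measurable_log_density[OF Pr H]
          nn_integral_exp_log_density[OF Q H] bounded_differences_log_density[OF Q H diff]])
      (use range b \<delta> in auto)
  also have "\<dots> = (\<integral>\<^sup>+x. emeasure (Q x) (?good x) \<partial>sample_space M n)"
    by (intro nn_integral_cong) (simp add: hamiltonian_density_log_density[OF Q H])
  finally show ?thesis .
qed

theorem theorem6:
  fixes M :: "'x measure" and Pr :: "('x \<Rightarrow> real) measure" and n :: nat
    and Q :: "(nat \<Rightarrow> 'x) \<Rightarrow> ('x \<Rightarrow> real) measure"
    and H :: "('x \<Rightarrow> real) \<Rightarrow> (nat \<Rightarrow> 'x) \<Rightarrow> real"
    and b c \<delta> :: real
  assumes "prob_space M"
    and "n > 0"
    and hyp_meas: "(\<lambda>(h, z). h z) \<in> borel_measurable (Pr \<Otimes>\<^sub>M M)"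
    and "abs_cont_algorithm Pr (sample_space M n) Q"
    and "is_hamiltonian Pr (sample_space M n) Q H"
    and bdiff: "\<And>k h y y' x. k < n \<Longrightarrow> h \<in> space Pr \<Longrightarrow> y \<in> space M \<Longrightarrow> y' \<in> space M \<Longrightarrow>
               x \<in> space (sample_space M n) \<Longrightarrow> H h (x(k := y)) - H h (x(k := y')) \<le> c"
    and brange: "\<And>h y. h \<in> space Pr \<Longrightarrow> y \<in> space M \<Longrightarrow> 0 \<le> h y \<and> h y \<le> b"
    and "\<delta> > 0"
  shows "ennreal (1 - \<delta>) \<le>
    (\<integral>\<^sup>+ x. emeasure (Q x) {h \<in> space Pr.
        gen_gap M n h x \<le> 2 * sqrt (hvar M h * (c\<^sup>2 + ln (1 / \<delta>) / real n))
                           + b * (c\<^sup>2 + ln (1 / \<delta>) / real n)} \<partial>(sample_space M n))"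
proof -
  note M = assms(1) and n = assms(2) and H = assms(5) and \<delta> = assms(8)
  have Q: "stochastic_algorithm Pr (sample_space M n) Q"
    using assms(4) by (simp add: abs_cont_algorithm_def)
  \<comment> \<open>For \<open>b \<le> 0\<close> all hypotheses vanish on \<open>space M\<close> and the \<open>\<lambda>\<close> of the main case would be \<open>0 / 0\<close>.\<close>
  consider "1 \<le> \<delta>" | "\<delta> < 1" "b \<le> 0" | "\<delta> < 1" "0 < b"
    by linarith
  then show ?thesis
  proof cases
    case 1
    then have "ennreal (1 - \<delta>) = 0"
      by (simp add: ennreal_eq_0_iff)
    then show ?thesis by simp
  next
    case 2
    then have "0 \<le> c\<^sup>2 + ln (1 / \<delta>) / real n"
      using \<delta> by simp
    then show ?thesis
      by (subst nn_integral_gen_gap_bound_nonpos_range[OF M Q]) (use brange 2 \<delta> in auto)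
  next
    case 3
    show ?thesis
      by (rule gen_gap_bound_hamiltonian[OF M n hyp_meas Q H bdiff]) (use brange 3 \<delta> in auto)
  qed
qed

end
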